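(* Let $f,g\in\mathbb{F}[Y,Z]$. If $g=\sum_{i\in[r]}g_ih_i$ with $g_i\in\mathbb{F}[Y]$ and $h_i\in\mathbb{F}[Z]$, then $\mathrm{maxrank}(M_{fg})\le r\cdot\mathrm{maxrank}(M_f)$.
   Context: $\mathbb{F}$ is a field, $Y=\{y_1,\dots,y_m\}$ and $Z=\{z_1,\dots,z_m\}$ are disjoint sets of variables. For $f\in\mathbb{F}[Y,Z]$, the polynomial coefficient matrix $M_f$ is the $2^m\times 2^m$ matrix with entries in $\mathbb{F}[Y,Z]$, rows indexed by monic multilinear monomials $p$ in $Y$ and columns by monic multilinear monomials $q$ in $Z$, where $M_f(p,q)=G$ if and only if $f$ can be uniquely written as $f=pq\,G+Q$ with $G$ containing no variable other than those present in $p$ and $q$, and $Q$ having no monomial which is divisible by $pq$ and contains only variables present in $p$ and $q$. For $S:Y\cup Z\to\mathbb{F}$, $M_f|_S$ is obtained by evaluating each entry at $S$, and $\mathrm{maxrank}(M_f)=\max_S\mathrm{rank}(M_f|_S)$. *)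

theory Defs
  imports "HOL-Library.Poly_Mapping" "Jordan_Normal_Form.DL_Rank"
begin

text \<open>Variables: Yv i stands for y_(i+1), Zv i for z_(i+1), i < m.\<close>
datatype var = Yv nat | Zv nat

type_synonym 'a mpoly = "(var \<Rightarrow>\<^sub>0 nat) \<Rightarrow>\<^sub>0 'a"

definition vars :: "'a::zero mpoly \<Rightarrow> var set" where
  "vars p = (\<Union>\<alpha>\<in>Poly_Mapping.keys p. Poly_Mapping.keys \<alpha>)"

definition Yvars :: "nat \<Rightarrow> var set" where "Yvars m = Yv ` {..<m}"
definition Zvars :: "nat \<Rightarrow> var set" where "Zvars m = Zv ` {..<m}"

definition eval :: "(var \<Rightarrow> 'a::comm_semiring_1) \<Rightarrow> 'a mpoly \<Rightarrow> 'a" where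
  "eval S p = (\<Sum>\<alpha>\<in>Poly_Mapping.keys p.
       Poly_Mapping.lookup p \<alpha> * (\<Prod>v\<in>Poly_Mapping.keys \<alpha>. S v ^ Poly_Mapping.lookup \<alpha> v))"

definition mlmon :: "var set \<Rightarrow> (var \<Rightarrow>\<^sub>0 nat)" where
  "mlmon V = (\<Sum>v\<in>V. Poly_Mapping.single v 1)"

text \<open>Row/column index k < 2^m encodes the subset {i<m. bit k i}.\<close>
definition idxset :: "nat \<Rightarrow> nat \<Rightarrow> nat set" where
  "idxset m k = {i. i < m \<and> bit k i}"

text \<open>Entry M_f(p,q) for p = prod_{i in P} y_i and q = prod_{j in Q} z_j:
  the unique G with vars G within those of p q, f = p q G + R, and no monomial of R
  divisible by p q and containing only variables of p q.\<close>
definition coeffM :: "'a::comm_ring_1 mpoly \<Rightarrow> nat set \<Rightarrow> nat set \<Rightarrow> 'a mpoly" where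
  "coeffM f P Q = (let V = Yv ` P \<union> Zv ` Q in
     THE G. vars G \<subseteq> V \<and>
       (\<exists>R. f = Poly_Mapping.single (mlmon V) 1 * G + R \<and>
            (\<forall>\<beta>\<in>Poly_Mapping.keys R. \<not> ((\<forall>v. Poly_Mapping.lookup (mlmon V) v \<le> Poly_Mapping.lookup \<beta> v) \<and> Poly_Mapping.keys \<beta> \<subseteq> V))))"

definition Meval :: "nat \<Rightarrow> 'a::field mpoly \<Rightarrow> (var \<Rightarrow> 'a) \<Rightarrow> 'a mat" where
  "Meval m f S = mat (2^m) (2^m) (\<lambda>(k, l). eval S (coeffM f (idxset m k) (idxset m l)))"

definition maxrank :: "nat \<Rightarrow> 'a::field mpoly \<Rightarrow> nat" where
  "maxrank m f = Max {vec_space.rank (2^m) (Meval m f S) | S. True}"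

end

theory Submission
  imports Defs
begin

text \<open>The entry of \<open>M\<^sub>f\<close> at the variable set \<open>V\<close> is the coefficient \<open>c\<^sub>f(V)\<close> of the multilinear
  monomial \<open>x\<^sup>V\<close>, and coefficients of products obey
  \<open>c\<^sub>f\<^sub>g(V) = (\<Sum>U \<union> W = V. x\<^bsup>U \<inter> W\<^esup> c\<^sub>f(U) c\<^sub>g(W))\<close>.
  If \<open>g\<close> only involves \<open>Y\<close>-variables, only sets \<open>W\<close> of \<open>Y\<close>-variables contribute, so \<open>U\<close> keeps
  the whole \<open>Z\<close>-part of \<open>V\<close>: after evaluation, multiplication by \<open>g\<close> is multiplication of
  \<open>M\<^sub>f|\<^sub>S\<close> by a matrix from the left. Symmetrically, multiplication by \<open>h \<in> \<bbbF>[Z]\<close> is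
  multiplication from the right. Hence \<open>rank (M\<^bsub>f g\<^sub>i h\<^sub>i\<^esub>|\<^sub>S) \<le> rank (M\<^sub>f|\<^sub>S)\<close>, and subadditivity of
  the rank over the \<open>r\<close> summands gives the bound at every point \<open>S\<close>.\<close>

abbreviation lookup :: "('a \<Rightarrow>\<^sub>0 'b::zero) \<Rightarrow> 'a \<Rightarrow> 'b" where
  "lookup \<equiv> Poly_Mapping.lookup"

abbreviation keys :: "('a \<Rightarrow>\<^sub>0 'b::zero) \<Rightarrow> 'a set" where
  "keys \<equiv> Poly_Mapping.keys"

abbreviation single :: "'a \<Rightarrow> 'b::zero \<Rightarrow> 'a \<Rightarrow>\<^sub>0 'b" where
  "single \<equiv> Poly_Mapping.single"

lemma add_eq_iff_le_diff:
  fixes \<alpha> \<mu> \<beta> :: "'v \<Rightarrow>\<^sub>0 nat"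
  shows "\<alpha> = \<mu> + \<beta> \<longleftrightarrow> lookup \<mu> \<le> lookup \<alpha> \<and> \<beta> = \<alpha> - \<mu>"
  unfolding poly_mapping_eq_iff fun_eq_iff lookup_add lookup_minus le_fun_def by auto

lemma diff_add_cancel_le:
  fixes \<alpha> \<mu> :: "'v \<Rightarrow>\<^sub>0 nat"
  shows "lookup \<mu> \<le> lookup \<alpha> \<Longrightarrow> \<alpha> - \<mu> + \<mu> = \<alpha>"
  unfolding poly_mapping_eq_iff fun_eq_iff lookup_add lookup_minus le_fun_def by auto

lemma keys_add_nat: "keys (\<alpha> + \<beta>) = keys \<alpha> \<union> keys (\<beta> :: 'v \<Rightarrow>\<^sub>0 nat)"
  by (auto simp: in_keys_iff lookup_add)

lemma keys_diff_subset: "keys (\<alpha> - \<beta>) \<subseteq> keys (\<alpha> :: 'v \<Rightarrow>\<^sub>0 nat)"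
  by (auto simp: in_keys_iff lookup_minus)

lemma lookup_single_one_mult:
  fixes \<mu> \<alpha> :: "'v \<Rightarrow>\<^sub>0 nat" and p :: "('v \<Rightarrow>\<^sub>0 nat) \<Rightarrow>\<^sub>0 'a::comm_semiring_1"
  shows "lookup (single \<mu> 1 * p) \<alpha> = (if lookup \<mu> \<le> lookup \<alpha> then lookup p (\<alpha> - \<mu>) else 0)"
proof -
  have "lookup (single \<mu> 1 * p) \<alpha> = Sum_any (\<lambda>\<beta>. lookup p \<beta> when \<alpha> = \<mu> + \<beta>)"
    unfolding lookup_mult lookup_single by (simp add: when_mult)
  also have "\<dots> = (if lookup \<mu> \<le> lookup \<alpha> then lookup p (\<alpha> - \<mu>) else 0)"
    unfolding add_eq_iff_le_diff by (cases "lookup \<mu> \<le> lookup \<alpha>") (simp_all add: when_def)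
  finally show ?thesis .
qed

lemma single_one_mult_cancel:
  fixes p q :: "('v \<Rightarrow>\<^sub>0 nat) \<Rightarrow>\<^sub>0 'a::comm_semiring_1"
  assumes "single \<mu> 1 * p = single \<mu> 1 * q"
  shows "p = q"
proof (rule poly_mapping_eqI)
  fix \<gamma>
  have "lookup (single \<mu> (1::'a) * p) (\<gamma> + \<mu>) = lookup (single \<mu> 1 * q) (\<gamma> + \<mu>)"
    using assms by simp
  then show "lookup p \<gamma> = lookup q \<gamma>"
    unfolding lookup_single_one_mult by (simp add: le_fun_def lookup_add)
qed

lemma poly_mapping_sum_single: "p = (\<Sum>\<alpha>\<in>keys p. single \<alpha> (lookup p \<alpha>))"
proof (rule poly_mapping_eqI)
  fix k
  have "(\<Sum>\<alpha>\<in>keys p. lookup (single \<alpha> (lookup p \<alpha>)) k) = (\<Sum>\<alpha>\<in>keys p. if \<alpha> = k then lookup p \<alpha> else 0)"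
    by (simp add: lookup_single when_def)
  also have "\<dots> = lookup p k" by (simp add: in_keys_iff)
  finally show "lookup p k = lookup (\<Sum>\<alpha>\<in>keys p. single \<alpha> (lookup p \<alpha>)) k"
    by (simp add: lookup_sum)
qed

lemma lookup_mlmon: "finite V \<Longrightarrow> lookup (mlmon V) v = (if v \<in> V then 1 else 0)"
  unfolding mlmon_def lookup_sum lookup_single by (simp add: when_def)

lemma keys_mlmon: "finite V \<Longrightarrow> keys (mlmon V) = V"
  by (auto simp: in_keys_iff lookup_mlmon split: if_splits)

lemma mlmon_union_inter:
  "finite U \<Longrightarrow> finite W \<Longrightarrow> mlmon U + mlmon W = mlmon (U \<union> W) + mlmon (U \<inter> W)"
  by (rule poly_mapping_eqI) (simp add: lookup_add lookup_mlmon)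

subsection \<open>Coefficients of multilinear monomials\<close>

text \<open>\<open>mlcoeff f V\<close> is the entry \<open>G\<close> of the coefficient matrix at the multilinear monomial
  \<open>x\<^sup>V\<close> (see \<open>coeffM_eq_mlcoeff\<close>): the monomials of \<open>f\<close> divisible by \<open>x\<^sup>V\<close> and involving no
  variable outside \<open>V\<close>, divided by \<open>x\<^sup>V\<close>.\<close>
definition mlcoeff :: "'a::zero mpoly \<Rightarrow> var set \<Rightarrow> 'a mpoly" where
  "mlcoeff f V = Abs_poly_mapping (\<lambda>\<gamma>. if keys \<gamma> \<subseteq> V then lookup f (\<gamma> + mlmon V) else 0)"

lemma lookup_mlcoeff:
  "lookup (mlcoeff f V) \<gamma> = (if keys \<gamma> \<subseteq> V then lookup f (\<gamma> + mlmon V) else 0)"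
proof -
  have "{\<gamma>. (if keys \<gamma> \<subseteq> V then lookup f (\<gamma> + mlmon V) else 0) \<noteq> 0}
      \<subseteq> (\<lambda>\<alpha>. \<alpha> - mlmon V) ` keys f"
  proof
    fix \<gamma> assume "\<gamma> \<in> {\<gamma>. (if keys \<gamma> \<subseteq> V then lookup f (\<gamma> + mlmon V) else 0) \<noteq> 0}"
    then have "\<gamma> + mlmon V \<in> keys f" by (simp add: in_keys_iff split: if_splits)
    then show "\<gamma> \<in> (\<lambda>\<alpha>. \<alpha> - mlmon V) ` keys f" by (rule rev_image_eqI) simp
  qed
  then have "finite {\<gamma>. (if keys \<gamma> \<subseteq> V then lookup f (\<gamma> + mlmon V) else 0) \<noteq> 0}"
    by (rule finite_subset) simp
  then show ?thesis unfolding mlcoeff_def by simp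
qed

lemma vars_mlcoeff: "vars (mlcoeff f V) \<subseteq> V"
proof
  fix v assume "v \<in> vars (mlcoeff f V)"
  then obtain \<gamma> where "\<gamma> \<in> keys (mlcoeff f V)" "v \<in> keys \<gamma>" unfolding vars_def by blast
  then show "v \<in> V" by (auto simp: in_keys_iff lookup_mlcoeff split: if_splits)
qed

lemma mlcoeff_add: "mlcoeff (p + q) V = mlcoeff p V + mlcoeff q V"
  by (rule poly_mapping_eqI) (simp add: lookup_mlcoeff lookup_add)

lemma mlcoeff_zero: "mlcoeff 0 V = 0"
  by (rule poly_mapping_eqI) (simp add: lookup_mlcoeff)

lemma mlcoeff_eq_zero:
  assumes "finite V" and "\<not> V \<subseteq> vars f"
  shows "mlcoeff f V = 0"
proof (rule poly_mapping_eqI, rule ccontr)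
  fix \<gamma>
  assume "lookup (mlcoeff f V) \<gamma> \<noteq> lookup 0 \<gamma>"
  then have "\<gamma> + mlmon V \<in> keys f" by (auto simp: lookup_mlcoeff in_keys_iff split: if_splits)
  moreover have "V \<subseteq> keys (\<gamma> + mlmon V)" using keys_mlmon[OF assms(1)] by (simp add: keys_add_nat)
  ultimately show False using assms(2) unfolding vars_def by blast
qed

lemma keys_remainder_mlcoeff:
  fixes f :: "'a::comm_ring_1 mpoly"
  assumes "\<beta> \<in> keys (f - single (mlmon V) 1 * mlcoeff f V)" and "lookup (mlmon V) \<le> lookup \<beta>"
  shows "\<not> keys \<beta> \<subseteq> V"
proof
  assume "keys \<beta> \<subseteq> V"
  then have "keys (\<beta> - mlmon V) \<subseteq> V" by (rule order.trans[OF keys_diff_subset])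
  then have "lookup (f - single (mlmon V) 1 * mlcoeff f V) \<beta> = 0"
    using assms(2) unfolding lookup_minus lookup_single_one_mult lookup_mlcoeff
    by (simp add: diff_add_cancel_le)
  with assms(1) show False by (simp add: in_keys_iff)
qed

lemma mlcoeff_unique:
  fixes f G R :: "'a::comm_semiring_1 mpoly"
  assumes V: "finite V" and G: "vars G \<subseteq> V" and f: "f = single (mlmon V) 1 * G + R"
    and R: "\<And>\<beta>. \<beta> \<in> keys R \<Longrightarrow> lookup (mlmon V) \<le> lookup \<beta> \<Longrightarrow> \<not> keys \<beta> \<subseteq> V"
  shows "G = mlcoeff f V"
proof (rule poly_mapping_eqI)
  fix \<gamma>
  show "lookup G \<gamma> = lookup (mlcoeff f V) \<gamma>"
  proof (cases "keys \<gamma> \<subseteq> V")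
    case True
    have le: "lookup (mlmon V) \<le> lookup (\<gamma> + mlmon V)" by (simp add: le_fun_def lookup_add)
    have "keys (\<gamma> + mlmon V) \<subseteq> V" using True keys_mlmon[OF V] by (simp add: keys_add_nat)
    with le have "\<gamma> + mlmon V \<notin> keys R" using R by blast
    then have "lookup R (\<gamma> + mlmon V) = 0" by (simp add: in_keys_iff)
    with True le show ?thesis by (simp add: f lookup_add lookup_single_one_mult lookup_mlcoeff)
  next
    case False
    then have "\<gamma> \<notin> keys G" using G unfolding vars_def by blast
    with False show ?thesis by (simp add: lookup_mlcoeff in_keys_iff)
  qed
qed

lemma coeffM_eq_mlcoeff:
  fixes f :: "'a::comm_ring_1 mpoly"
  assumes "finite P" and "finite Q"
  shows "coeffM f P Q = mlcoeff f (Yv ` P \<union> Zv ` Q)"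
  unfolding coeffM_def Let_def le_fun_def[symmetric]
proof (rule the_equality)
  let ?V = "Yv ` P \<union> Zv ` Q"
  have V: "finite ?V" using assms by simp
  show "vars (mlcoeff f ?V) \<subseteq> ?V \<and> (\<exists>R. f = single (mlmon ?V) 1 * mlcoeff f ?V + R \<and>
      (\<forall>\<beta>\<in>keys R. \<not> (lookup (mlmon ?V) \<le> lookup \<beta> \<and> keys \<beta> \<subseteq> ?V)))"
  proof (intro conjI exI[of _ "f - single (mlmon ?V) 1 * mlcoeff f ?V"] ballI)
    fix \<beta> assume "\<beta> \<in> keys (f - single (mlmon ?V) 1 * mlcoeff f ?V)"
    then show "\<not> (lookup (mlmon ?V) \<le> lookup \<beta> \<and> keys \<beta> \<subseteq> ?V)"
      using keys_remainder_mlcoeff by blast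
  qed (simp_all add: vars_mlcoeff)
  show "G = mlcoeff f ?V" if "vars G \<subseteq> ?V \<and> (\<exists>R. f = single (mlmon ?V) 1 * G + R \<and>
      (\<forall>\<beta>\<in>keys R. \<not> (lookup (mlmon ?V) \<le> lookup \<beta> \<and> keys \<beta> \<subseteq> ?V)))" for G
  proof -
    from that obtain R where G: "vars G \<subseteq> ?V" and f: "f = single (mlmon ?V) 1 * G + R"
      and R: "\<forall>\<beta>\<in>keys R. \<not> (lookup (mlmon ?V) \<le> lookup \<beta> \<and> keys \<beta> \<subseteq> ?V)"
      by blast
    show ?thesis using R by (intro mlcoeff_unique[OF V G f]) blast
  qed
qed

subsection \<open>The product formula\<close>

definition varpart :: "var set \<Rightarrow> 'a::zero mpoly \<Rightarrow> 'a mpoly" where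
  "varpart V f = Abs_poly_mapping (\<lambda>\<alpha>. if keys \<alpha> = V then lookup f \<alpha> else 0)"

lemma lookup_varpart: "lookup (varpart V f) \<alpha> = (if keys \<alpha> = V then lookup f \<alpha> else 0)"
proof -
  have "{\<alpha>. (if keys \<alpha> = V then lookup f \<alpha> else 0) \<noteq> 0} \<subseteq> keys f" by (auto simp: in_keys_iff)
  then have "finite {\<alpha>. (if keys \<alpha> = V then lookup f \<alpha> else 0) \<noteq> 0}" by (rule finite_subset) simp
  then show ?thesis unfolding varpart_def by simp
qed

lemma varpart_sum: "varpart V (\<Sum>i\<in>I. p i) = (\<Sum>i\<in>I. varpart V (p i))"
  by (rule poly_mapping_eqI) (simp add: lookup_varpart lookup_sum)

lemma sum_varpart:
  assumes "finite \<V>" and "keys ` keys f \<subseteq> \<V>"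
  shows "(\<Sum>V\<in>\<V>. varpart V f) = f"
proof (rule poly_mapping_eqI)
  fix \<alpha>
  have "(\<Sum>V\<in>\<V>. lookup (varpart V f) \<alpha>) = (if keys \<alpha> \<in> \<V> then lookup f \<alpha> else 0)"
    using assms(1) by (simp add: lookup_varpart)
  also have "\<dots> = lookup f \<alpha>"
    using assms(2) by (cases "\<alpha> \<in> keys f") (auto simp: in_keys_iff)
  finally show "lookup (\<Sum>V\<in>\<V>. varpart V f) \<alpha> = lookup f \<alpha>" by (simp add: lookup_sum)
qed

lemma varpart_eq_single_mult_mlcoeff:
  fixes f :: "'a::comm_semiring_1 mpoly"
  assumes V: "finite V"
  shows "varpart V f = single (mlmon V) 1 * mlcoeff f V"
proof (rule poly_mapping_eqI)
  fix \<alpha>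
  have iff: "keys \<alpha> = V \<longleftrightarrow> lookup (mlmon V) \<le> lookup \<alpha> \<and> keys (\<alpha> - mlmon V) \<subseteq> V"
  proof
    assume keys: "keys \<alpha> = V"
    have "lookup (mlmon V) v \<le> lookup \<alpha> v" for v
      using keys lookup_mlmon[OF V, of v] by (cases "v \<in> V") (auto simp: in_keys_iff Suc_le_eq)
    then show "lookup (mlmon V) \<le> lookup \<alpha> \<and> keys (\<alpha> - mlmon V) \<subseteq> V"
      using keys keys_diff_subset[of \<alpha> "mlmon V"] by (simp add: le_fun_def)
  next
    assume le: "lookup (mlmon V) \<le> lookup \<alpha> \<and> keys (\<alpha> - mlmon V) \<subseteq> V"
    have "keys \<alpha> = keys (\<alpha> - mlmon V) \<union> keys (mlmon V)"
      using diff_add_cancel_le[of "mlmon V" \<alpha>] keys_add_nat[of "\<alpha> - mlmon V" "mlmon V"] le by simp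
    moreover have "V \<subseteq> keys \<alpha>"
    proof
      fix v assume "v \<in> V"
      then have "1 \<le> lookup \<alpha> v" using le_funD[OF conjunct1[OF le], of v] by (simp add: lookup_mlmon[OF V])
      then show "v \<in> keys \<alpha>" by (simp add: in_keys_iff)
    qed
    ultimately show "keys \<alpha> = V" using le keys_mlmon[OF V] by blast
  qed
  show "lookup (varpart V f) \<alpha> = lookup (single (mlmon V) 1 * mlcoeff f V) \<alpha>"
    unfolding lookup_varpart lookup_single_one_mult lookup_mlcoeff iff
    by (simp add: diff_add_cancel_le)
qed

lemma varpart_mult_varpart:
  fixes f g :: "'a::comm_semiring_1 mpoly"
  shows "varpart V (varpart U f * varpart W g) = (if U \<union> W = V then varpart U f * varpart W g else 0)"
proof (rule poly_mapping_eqI)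
  fix \<alpha>
  have "keys \<alpha> = U \<union> W" if "\<alpha> \<in> keys (varpart U f * varpart W g)"
  proof -
    have "\<exists>a b. \<alpha> = a + b \<and> a \<in> keys (varpart U f) \<and> b \<in> keys (varpart W g)"
      using keys_mult[of "varpart U f" "varpart W g"] that by blast
    then obtain a b where "\<alpha> = a + b" "a \<in> keys (varpart U f)" "b \<in> keys (varpart W g)"
      by blast
    then show ?thesis by (auto simp: keys_add_nat in_keys_iff lookup_varpart split: if_splits)
  qed
  then show "lookup (varpart V (varpart U f * varpart W g)) \<alpha> =
      lookup (if U \<union> W = V then varpart U f * varpart W g else 0) \<alpha>"
    by (cases "\<alpha> \<in> keys (varpart U f * varpart W g)") (auto simp: lookup_varpart in_keys_iff)
qed

lemma varpart_mult:
  fixes f g :: "'a::comm_semiring_1 mpoly"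
  assumes V: "finite V"
  shows "varpart V (f * g) =
    (\<Sum>U\<in>Pow V. \<Sum>W\<in>Pow V. if U \<union> W = V then varpart U f * varpart W g else 0)"
proof -
  define \<V> where "\<V> = Pow V \<union> keys ` keys f \<union> keys ` keys g"
  have fin: "finite \<V>" and PV: "Pow V \<subseteq> \<V>" unfolding \<V>_def using V by auto
  have "(\<Sum>U\<in>\<V>. varpart U f) = f" by (rule sum_varpart[OF fin]) (auto simp: \<V>_def)
  moreover have "(\<Sum>W\<in>\<V>. varpart W g) = g" by (rule sum_varpart[OF fin]) (auto simp: \<V>_def)
  ultimately have "f * g = (\<Sum>U\<in>\<V>. varpart U f) * (\<Sum>W\<in>\<V>. varpart W g)" by simp
  then have "varpart V (f * g) =
      (\<Sum>U\<in>\<V>. \<Sum>W\<in>\<V>. if U \<union> W = V then varpart U f * varpart W g else 0)"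
    by (simp add: sum_product varpart_sum varpart_mult_varpart)
  also have "\<dots> = (\<Sum>U\<in>Pow V. \<Sum>W\<in>\<V>. if U \<union> W = V then varpart U f * varpart W g else 0)"
  proof (rule sum.mono_neutral_right[OF fin PV], rule ballI)
    fix U assume "U \<in> \<V> - Pow V"
    then have "U \<union> W \<noteq> V" for W by blast
    then show "(\<Sum>W\<in>\<V>. if U \<union> W = V then varpart U f * varpart W g else 0) = 0" by simp
  qed
  also have "\<dots> = (\<Sum>U\<in>Pow V. \<Sum>W\<in>Pow V. if U \<union> W = V then varpart U f * varpart W g else 0)"
    by (rule sum.cong[OF refl], rule sum.mono_neutral_right[OF fin PV]) auto
  finally show ?thesis .
qed

lemma mlcoeff_mult:
  fixes f g :: "'a::comm_semiring_1 mpoly"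
  assumes V: "finite V"
  shows "mlcoeff (f * g) V = (\<Sum>U\<in>Pow V. \<Sum>W\<in>Pow V.
     if U \<union> W = V then single (mlmon (U \<inter> W)) 1 * mlcoeff f U * mlcoeff g W else 0)"
proof (rule single_one_mult_cancel)
  have "varpart U f * varpart W g =
      single (mlmon V) 1 * (single (mlmon (U \<inter> W)) 1 * mlcoeff f U * mlcoeff g W)"
    if "U \<in> Pow V" "W \<in> Pow V" "U \<union> W = V" for U W
  proof -
    have fin: "finite U" "finite W" using that V finite_subset by auto
    have "single (mlmon U) 1 * single (mlmon W) 1 = single (mlmon V) (1::'a) * single (mlmon (U \<inter> W)) 1"
      using mlmon_union_inter[OF fin] that(3) by (simp add: mult_single)
    then show ?thesis
      unfolding varpart_eq_single_mult_mlcoeff[OF fin(1)] varpart_eq_single_mult_mlcoeff[OF fin(2)]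
      by (metis (no_types, lifting) mult.assoc mult.left_commute)
  qed
  then show "single (mlmon V) 1 * mlcoeff (f * g) V = single (mlmon V) 1 * (\<Sum>U\<in>Pow V. \<Sum>W\<in>Pow V.
     if U \<union> W = V then single (mlmon (U \<inter> W)) 1 * mlcoeff f U * mlcoeff g W else 0)"
    unfolding varpart_eq_single_mult_mlcoeff[OF V, symmetric] varpart_mult[OF V] sum_distrib_left
    by (intro sum.cong refl) auto
qed

lemma sum_Pow_union_eq:
  assumes V: "finite V" and W: "W \<subseteq> V \<inter> X"
  shows "(\<Sum>U\<in>Pow V. if U \<union> W = V then t U else 0) =
    (\<Sum>A\<in>Pow (V \<inter> X). if A \<union> W = V \<inter> X then t ((V - X) \<union> A) else 0)"
proof -
  let ?e = "\<lambda>A. (V - X) \<union> A"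
  have inj: "inj_on ?e (Pow (V \<inter> X))" by (rule inj_onI) blast
  have "(\<Sum>A\<in>Pow (V \<inter> X). if A \<union> W = V \<inter> X then t (?e A) else 0) =
      (\<Sum>A\<in>Pow (V \<inter> X). if ?e A \<union> W = V then t (?e A) else 0)"
    by (rule sum.cong) (use W in auto)
  also have "\<dots> = (\<Sum>U\<in>?e ` Pow (V \<inter> X). if U \<union> W = V then t U else 0)"
    by (simp only: sum.reindex[OF inj] comp_def)
  also have "\<dots> = (\<Sum>U\<in>Pow V. if U \<union> W = V then t U else 0)"
  proof (rule sum.mono_neutral_left)
    show "\<forall>U\<in>Pow V - ?e ` Pow (V \<inter> X). (if U \<union> W = V then t U else 0) = 0"
    proof
      fix U assume U: "U \<in> Pow V - ?e ` Pow (V \<inter> X)"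
      have "U \<noteq> ?e (U \<inter> X)" using U by blast
      then show "(if U \<union> W = V then t U else 0) = 0" using W by auto
    qed
  qed (use V in auto)
  finally show ?thesis by simp
qed

text \<open>If \<open>g\<close> only involves variables from \<open>X\<close>, the product formula collapses: every coefficient
  of \<open>g\<close> that occurs belongs to a subset of \<open>V \<inter> X\<close>, so every coefficient of \<open>f\<close> that occurs
  contains all of \<open>V - X\<close>.\<close>
lemma mlcoeff_mult_vars:
  fixes f g :: "'a::comm_semiring_1 mpoly"
  assumes V: "finite V" and g: "vars g \<subseteq> X"
  shows "mlcoeff (f * g) V = (\<Sum>A\<in>Pow (V \<inter> X). \<Sum>W\<in>Pow (V \<inter> X). if A \<union> W = V \<inter> X
     then single (mlmon (A \<inter> W)) 1 * mlcoeff f ((V - X) \<union> A) * mlcoeff g W else 0)"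
proof -
  have vanish: "mlcoeff g W = 0" if "W \<subseteq> V" "\<not> W \<subseteq> V \<inter> X" for W
    using that g V finite_subset by (intro mlcoeff_eq_zero) blast+
  have "mlcoeff (f * g) V = (\<Sum>W\<in>Pow V. \<Sum>U\<in>Pow V.
     if U \<union> W = V then single (mlmon (U \<inter> W)) 1 * mlcoeff f U * mlcoeff g W else 0)"
    unfolding mlcoeff_mult[OF V] by (rule sum.swap)
  also have "\<dots> = (\<Sum>W\<in>Pow (V \<inter> X). \<Sum>U\<in>Pow V.
     if U \<union> W = V then single (mlmon (U \<inter> W)) 1 * mlcoeff f U * mlcoeff g W else 0)"
    by (rule sum.mono_neutral_right) (use V vanish in auto)
  also have "\<dots> = (\<Sum>W\<in>Pow (V \<inter> X). \<Sum>A\<in>Pow (V \<inter> X). if A \<union> W = V \<inter> X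
     then single (mlmon (A \<inter> W)) 1 * mlcoeff f ((V - X) \<union> A) * mlcoeff g W else 0)"
  proof (rule sum.cong[OF refl])
    fix W assume "W \<in> Pow (V \<inter> X)"
    then have W: "W \<subseteq> V \<inter> X" by simp
    then have int: "((V - X) \<union> A) \<inter> W = A \<inter> W" for A by blast
    from sum_Pow_union_eq[OF V W,
        of "\<lambda>U. single (mlmon (U \<inter> W)) 1 * mlcoeff f U * mlcoeff g W"] show "(\<Sum>U\<in>Pow V.
     if U \<union> W = V then single (mlmon (U \<inter> W)) 1 * mlcoeff f U * mlcoeff g W else 0) =
      (\<Sum>A\<in>Pow (V \<inter> X). if A \<union> W = V \<inter> X
     then single (mlmon (A \<inter> W)) 1 * mlcoeff f ((V - X) \<union> A) * mlcoeff g W else 0)"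
      by (simp only: int)
  qed
  also have "\<dots> = (\<Sum>A\<in>Pow (V \<inter> X). \<Sum>W\<in>Pow (V \<inter> X). if A \<union> W = V \<inter> X
     then single (mlmon (A \<inter> W)) 1 * mlcoeff f ((V - X) \<union> A) * mlcoeff g W else 0)"
    by (rule sum.swap)
  finally show ?thesis .
qed

definition monomial_value :: "(var \<Rightarrow> 'a::comm_semiring_1) \<Rightarrow> (var \<Rightarrow>\<^sub>0 nat) \<Rightarrow> 'a" where
  "monomial_value S \<alpha> = (\<Prod>v\<in>keys \<alpha>. S v ^ lookup \<alpha> v)"

lemma monomial_value_superset:
  "finite K \<Longrightarrow> keys \<alpha> \<subseteq> K \<Longrightarrow> monomial_value S \<alpha> = (\<Prod>v\<in>K. S v ^ lookup \<alpha> v)"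
  unfolding monomial_value_def by (rule prod.mono_neutral_left) (auto simp: in_keys_iff)

lemma monomial_value_add: "monomial_value S (\<alpha> + \<beta>) = monomial_value S \<alpha> * monomial_value S \<beta>"
proof -
  let ?K = "keys \<alpha> \<union> keys \<beta>"
  have "monomial_value S (\<alpha> + \<beta>) = (\<Prod>v\<in>?K. S v ^ lookup (\<alpha> + \<beta>) v)"
    by (rule monomial_value_superset) (simp_all add: keys_add_nat)
  also have "\<dots> = (\<Prod>v\<in>?K. S v ^ lookup \<alpha> v) * (\<Prod>v\<in>?K. S v ^ lookup \<beta> v)"
    by (simp add: lookup_add power_add prod.distrib)
  also have "\<dots> = monomial_value S \<alpha> * monomial_value S \<beta>"
    using monomial_value_superset[of ?K \<alpha> S] monomial_value_superset[of ?K \<beta> S] by simp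
  finally show ?thesis .
qed

lemma eval_superset:
  "finite F \<Longrightarrow> keys p \<subseteq> F \<Longrightarrow> eval S p = (\<Sum>\<alpha>\<in>F. lookup p \<alpha> * monomial_value S \<alpha>)"
  unfolding eval_def monomial_value_def[symmetric]
  by (rule sum.mono_neutral_left) (auto simp: in_keys_iff)

lemma eval_zero: "eval S 0 = 0"
  by (simp add: eval_def)

lemma eval_add: "eval S (p + q) = eval S p + eval S q"
proof -
  let ?F = "keys p \<union> keys q"
  have "eval S (p + q) = (\<Sum>\<alpha>\<in>?F. lookup (p + q) \<alpha> * monomial_value S \<alpha>)"
    using keys_add[of p q] by (intro eval_superset) auto
  also have "\<dots> = (\<Sum>\<alpha>\<in>?F. lookup p \<alpha> * monomial_value S \<alpha>) + (\<Sum>\<alpha>\<in>?F. lookup q \<alpha> * monomial_value S \<alpha>)"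
    by (simp add: lookup_add distrib_right sum.distrib)
  also have "\<dots> = eval S p + eval S q"
    using eval_superset[of ?F p S] eval_superset[of ?F q S] by simp
  finally show ?thesis .
qed

lemma eval_sum: "eval S (\<Sum>i\<in>I. p i) = (\<Sum>i\<in>I. eval S (p i))"
  by (induction I rule: infinite_finite_induct) (simp_all add: eval_zero eval_add)

lemma eval_single: "eval S (single \<alpha> c) = c * monomial_value S \<alpha>"
  using eval_superset[of "{\<alpha>}" "single \<alpha> c" S] by simp

lemma eval_mult: "eval S (p * q) = eval S p * eval S (q :: 'a::comm_semiring_1 mpoly)"
proof -
  have "p * q = (\<Sum>\<alpha>\<in>keys p. single \<alpha> (lookup p \<alpha>)) * (\<Sum>\<beta>\<in>keys q. single \<beta> (lookup q \<beta>))"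
    using poly_mapping_sum_single by metis
  also have "\<dots> = (\<Sum>\<alpha>\<in>keys p. \<Sum>\<beta>\<in>keys q. single (\<alpha> + \<beta>) (lookup p \<alpha> * lookup q \<beta>))"
    by (simp add: sum_product mult_single)
  finally have "eval S (p * q) = (\<Sum>\<alpha>\<in>keys p. \<Sum>\<beta>\<in>keys q.
      (lookup p \<alpha> * monomial_value S \<alpha>) * (lookup q \<beta> * monomial_value S \<beta>))"
    by (simp add: eval_sum eval_single monomial_value_add mult_ac)
  also have "\<dots> = eval S p * eval S q"
    unfolding eval_def monomial_value_def[symmetric] by (simp add: sum_product)
  finally show ?thesis .
qed

subsection \<open>Coefficient matrices of products\<close>

lemma finite_idxset: "finite (idxset m k)"
  by (simp add: idxset_def)

lemma bij_betw_idxset: "bij_betw (idxset m) {..<2^m} (Pow {..<m})"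
proof -
  have inj: "inj_on (idxset m) {..<2^m}"
  proof (rule inj_onI)
    fix j j' assume j: "j \<in> {..<2^m}" "j' \<in> {..<2^m}" and eq: "idxset m j = idxset m j'"
    have "bit j i = bit j' i" for i
    proof (cases "i < m")
      case True
      then show ?thesis using eq by (auto simp: idxset_def set_eq_iff)
    next
      case False
      have "take_bit m j = j" "take_bit m j' = j'"
        using j by (simp_all add: take_bit_nat_eq_self_iff)
      then show ?thesis using False by (metis bit_take_bit_iff)
    qed
    then show "j = j'" by (simp add: bit_eq_iff)
  qed
  moreover have "idxset m ` {..<2^m} = Pow {..<m}"
  proof (rule card_subset_eq)
    show "idxset m ` {..<2^m} \<subseteq> Pow {..<m}" by (auto simp: idxset_def)
    show "card (idxset m ` {..<2^m}) = card (Pow {..<m})"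
      using card_image[OF inj] by (simp add: card_Pow)
  qed simp
  ultimately show ?thesis unfolding bij_betw_def by simp
qed

lemma sum_image_idxset:
  assumes "inj \<iota>" and C: "C \<subseteq> \<iota> ` {..<m}" and F: "\<And>A. \<not> A \<subseteq> C \<Longrightarrow> F A = 0"
  shows "(\<Sum>j<2^m. F (\<iota> ` idxset m j)) = (\<Sum>A\<in>Pow C. F A)"
proof -
  have "bij_betw \<iota> {..<m} (\<iota> ` {..<m})"
    using inj_on_subset[OF assms(1) subset_UNIV] by (simp add: bij_betw_def)
  then have "bij_betw ((`) \<iota> \<circ> idxset m) {..<2^m} (Pow (\<iota> ` {..<m}))"
    by (intro bij_betw_trans[OF bij_betw_idxset] bij_betw_Pow)
  then have "(\<Sum>j<2^m. F (\<iota> ` idxset m j)) = (\<Sum>A\<in>Pow (\<iota> ` {..<m}). F A)"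
    using sum.reindex_bij_betw[of _ _ _ F] by (simp add: comp_def)
  also have "\<dots> = (\<Sum>A\<in>Pow C. F A)"
    by (rule sum.mono_neutral_right) (use C F in auto)
  finally show ?thesis .
qed

lemma index_mult_mat_sum:
  fixes A B :: "'a::comm_semiring_0 mat"
  assumes "A \<in> carrier_mat n p" "B \<in> carrier_mat p q" "k < n" "l < q"
  shows "(A * B) $$ (k, l) = (\<Sum>j<p. A $$ (k, j) * B $$ (j, l))"
  using assms by (auto simp: scalar_prod_def atLeast0LessThan intro!: sum.cong)

lemma Meval_carrier: "Meval m f S \<in> carrier_mat (2^m) (2^m)"
  unfolding Meval_def by simp

lemma index_Meval:
  "k < 2^m \<Longrightarrow> l < 2^m \<Longrightarrow>
    Meval m f S $$ (k, l) = eval S (mlcoeff f (Yv ` idxset m k \<union> Zv ` idxset m l))"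
  unfolding Meval_def by (simp add: coeffM_eq_mlcoeff finite_idxset)

text \<open>Entry \<open>(j, k)\<close> is the factor with which the coefficient of \<open>f\<close> at \<open>\<iota> ` idxset m j\<close>
  contributes to that of \<open>f * g\<close> at \<open>\<iota> ` idxset m k\<close>, as read off from \<open>mlcoeff_mult_vars\<close>.\<close>
definition mult_matrix :: "nat \<Rightarrow> (nat \<Rightarrow> var) \<Rightarrow> (var \<Rightarrow> 'a::field) \<Rightarrow> 'a mpoly \<Rightarrow> 'a mat" where
  "mult_matrix m \<iota> S g = mat (2^m) (2^m) (\<lambda>(j, k). \<Sum>W\<in>Pow (\<iota> ` idxset m k).
     if \<iota> ` idxset m j \<union> W = \<iota> ` idxset m k
     then eval S (single (mlmon (\<iota> ` idxset m j \<inter> W)) 1 * mlcoeff g W) else 0)"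

lemma Meval_mult_Y:
  fixes f g :: "'a::field mpoly"
  assumes g: "vars g \<subseteq> range Yv"
  shows "Meval m (f * g) S = transpose_mat (mult_matrix m Yv S g) * Meval m f S"
proof (rule eq_matI)
  fix k l
  assume "k < dim_row (transpose_mat (mult_matrix m Yv S g) * Meval m f S)"
    and "l < dim_col (transpose_mat (mult_matrix m Yv S g) * Meval m f S)"
  then have k: "k < 2^m" and l: "l < 2^m" by (simp_all add: mult_matrix_def Meval_def)
  define P Q where "P = Yv ` idxset m k" and "Q = Zv ` idxset m l"
  define F where "F A = (\<Sum>W\<in>Pow P. if A \<union> W = P
    then eval S (single (mlmon (A \<inter> W)) 1 * mlcoeff g W) else 0) * eval S (mlcoeff f (A \<union> Q))" for A
  have finite: "finite (P \<union> Q)" by (simp add: P_def Q_def finite_idxset)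
  have split: "(P \<union> Q) \<inter> range Yv = P" "(P \<union> Q) - range Yv = Q" by (auto simp: P_def Q_def)
  have "Meval m (f * g) S $$ (k, l) = eval S (mlcoeff (f * g) (P \<union> Q))"
    using k l by (simp add: index_Meval P_def Q_def)
  also have "\<dots> = (\<Sum>A\<in>Pow P. F A)"
    unfolding mlcoeff_mult_vars[OF finite g] split F_def eval_sum sum_distrib_right
    by (intro sum.cong refl) (simp add: eval_mult eval_zero Un_commute mult_ac)
  also have "\<dots> = (\<Sum>j<2^m. F (Yv ` idxset m j))"
  proof (rule sum_image_idxset[symmetric])
    show "F A = 0" if "\<not> A \<subseteq> P" for A using that by (auto simp: F_def intro!: sum.neutral)
  qed (auto simp: P_def idxset_def inj_def)
  also have "\<dots> = (\<Sum>j<2^m. transpose_mat (mult_matrix m Yv S g) $$ (k, j) * Meval m f S $$ (j, l))"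
    by (intro sum.cong refl) (simp add: F_def P_def Q_def mult_matrix_def index_Meval k l)
  also have "\<dots> = (transpose_mat (mult_matrix m Yv S g) * Meval m f S) $$ (k, l)"
    by (rule index_mult_mat_sum[where n = "2^m" and p = "2^m" and q = "2^m", symmetric])
      (simp_all add: mult_matrix_def Meval_carrier k l)
  finally show "Meval m (f * g) S $$ (k, l) = (transpose_mat (mult_matrix m Yv S g) * Meval m f S) $$ (k, l)" .
qed (simp_all add: Meval_def mult_matrix_def)

lemma Meval_mult_Z:
  fixes f h :: "'a::field mpoly"
  assumes h: "vars h \<subseteq> range Zv"
  shows "Meval m (f * h) S = Meval m f S * mult_matrix m Zv S h"
proof (rule eq_matI)
  fix k l
  assume "k < dim_row (Meval m f S * mult_matrix m Zv S h)"
    and "l < dim_col (Meval m f S * mult_matrix m Zv S h)"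
  then have k: "k < 2^m" and l: "l < 2^m" by (simp_all add: mult_matrix_def Meval_def)
  define P Q where "P = Yv ` idxset m k" and "Q = Zv ` idxset m l"
  define F where "F B = eval S (mlcoeff f (P \<union> B)) * (\<Sum>W\<in>Pow Q. if B \<union> W = Q
    then eval S (single (mlmon (B \<inter> W)) 1 * mlcoeff h W) else 0)" for B
  have finite: "finite (P \<union> Q)" by (simp add: P_def Q_def finite_idxset)
  have split: "(P \<union> Q) \<inter> range Zv = Q" "(P \<union> Q) - range Zv = P" by (auto simp: P_def Q_def)
  have "Meval m (f * h) S $$ (k, l) = eval S (mlcoeff (f * h) (P \<union> Q))"
    using k l by (simp add: index_Meval P_def Q_def)
  also have "\<dots> = (\<Sum>B\<in>Pow Q. F B)"
    unfolding mlcoeff_mult_vars[OF finite h] split F_def eval_sum sum_distrib_left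
    by (intro sum.cong refl) (simp add: eval_mult eval_zero mult_ac)
  also have "\<dots> = (\<Sum>j<2^m. F (Zv ` idxset m j))"
  proof (rule sum_image_idxset[symmetric])
    show "F B = 0" if "\<not> B \<subseteq> Q" for B using that by (auto simp: F_def intro!: sum.neutral)
  qed (auto simp: Q_def idxset_def inj_def)
  also have "\<dots> = (\<Sum>j<2^m. Meval m f S $$ (k, j) * mult_matrix m Zv S h $$ (j, l))"
    by (intro sum.cong refl) (simp add: F_def P_def Q_def mult_matrix_def index_Meval k l)
  also have "\<dots> = (Meval m f S * mult_matrix m Zv S h) $$ (k, l)"
    by (rule index_mult_mat_sum[where n = "2^m" and p = "2^m" and q = "2^m", symmetric])
      (simp_all add: mult_matrix_def Meval_carrier k l)
  finally show "Meval m (f * h) S $$ (k, l) = (Meval m f S * mult_matrix m Zv S h) $$ (k, l)" .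
qed (simp_all add: Meval_def mult_matrix_def)

subsection \<open>Rank of matrix products\<close>

lemma set_cols: "set (cols A) = col A ` {..<dim_col A}"
  by (auto simp: cols_def)

lemma mult_mat_vec_lincomb_index:
  fixes A :: "'a::field mat"
  assumes A: "A \<in> carrier_mat n k" and W: "finite W" "W \<subseteq> carrier_vec k" and i: "i < n"
  shows "(A *\<^sub>v module.lincomb (module_vec TYPE('a) k) a W) $ i = (\<Sum>w\<in>W. a w * (A *\<^sub>v w) $ i)"
proof -
  interpret Vk: vec_space "TYPE('a)" k .
  have "(A *\<^sub>v Vk.lincomb a W) $ i = (\<Sum>l<k. A $$ (i, l) * (\<Sum>w\<in>W. a w * w $ l))"
    using A i Vk.lincomb_dim[OF W] Vk.lincomb_index[OF _ W(2)]
    by (auto simp: scalar_prod_def atLeast0LessThan intro!: sum.cong)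
  also have "\<dots> = (\<Sum>w\<in>W. a w * (\<Sum>l<k. A $$ (i, l) * w $ l))"
    by (simp add: sum_distrib_left mult_ac sum.swap[of _ "{..<k}"])
  also have "\<dots> = (\<Sum>w\<in>W. a w * (A *\<^sub>v w) $ i)"
    using A i W(2) by (auto simp: scalar_prod_def atLeast0LessThan intro!: sum.cong)
  finally show ?thesis .
qed

lemma lin_indpt_of_inj_image:
  fixes A :: "'a::field mat"
  assumes A: "A \<in> carrier_mat n k" and W: "finite W" "W \<subseteq> carrier_vec k"
    and inj: "inj_on ((*\<^sub>v) A) W"
    and ind: "module.lin_indpt class_ring (module_vec TYPE('a) n) ((*\<^sub>v) A ` W)"
  shows "module.lin_indpt class_ring (module_vec TYPE('a) k) W"
proof -
  interpret Vn: vec_space "TYPE('a)" n .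
  interpret Vk: vec_space "TYPE('a)" k .
  have AW: "(*\<^sub>v) A ` W \<subseteq> carrier_vec n" using A W(2) by auto
  show ?thesis
  proof (rule Vk.finite_lin_indpt2, goal_cases)
    case (3 a)
    then have lc: "Vk.lincomb a W = \<zero>\<^bsub>Vk.V\<^esub>" by simp
    define b where "b = a \<circ> the_inv_into W ((*\<^sub>v) A)"
    have "Vn.lincomb b ((*\<^sub>v) A ` W) = A *\<^sub>v Vk.lincomb a W"
    proof (rule eq_vecI)
      fix i assume "i < dim_vec (A *\<^sub>v Vk.lincomb a W)"
      then have i: "i < n" using A by simp
      show "Vn.lincomb b ((*\<^sub>v) A ` W) $ i = (A *\<^sub>v Vk.lincomb a W) $ i"
        unfolding mult_mat_vec_lincomb_index[OF A W i] Vn.lincomb_index[OF i AW]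
        by (simp add: sum.reindex[OF inj] b_def the_inv_into_f_f[OF inj])
    qed (use A Vn.lincomb_dim[OF _ AW] W in simp)
    also have "\<dots> = \<zero>\<^bsub>Vn.V\<^esub>" using lc A by auto
    finally have "b \<in> (*\<^sub>v) A ` W \<rightarrow> {\<zero>\<^bsub>class_ring\<^esub>}"
      using Vn.not_lindepD[OF ind _ subset_refl] W by simp
    then have "b (A *\<^sub>v v) = 0" if "v \<in> W" for v using that by auto
    then show ?case using the_inv_into_f_f[OF inj] by (simp add: b_def)
  qed (use W in auto)
qed

lemma rank_mult_left_le:
  fixes A :: "'a::field mat"
  assumes A: "A \<in> carrier_mat n k" and M: "M \<in> carrier_mat k nc"
  shows "vec_space.rank n (A * M) \<le> vec_space.rank k M"
proof -
  interpret Vn: vec_space "TYPE('a)" n .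
  interpret Vk: vec_space "TYPE('a)" k .
  have AM: "A * M \<in> carrier_mat n nc" using A M by simp
  obtain U where U: "maximal U (\<lambda>T. T \<subseteq> set (cols (A * M)) \<and> Vn.lin_indpt T)"
    using maximal_exists[of "\<lambda>T. T \<subseteq> set (cols (A * M)) \<and> Vn.lin_indpt T"
        "card (set (cols (A * M)))" "{}"]
    by (meson List.finite_set card_mono empty_iff empty_subsetI Vn.finite_lin_indpt2 rev_finite_subset)
  have Ucols: "U \<subseteq> set (cols (A * M))" and Uind: "Vn.lin_indpt U"
    using U unfolding maximal_def by auto
  have "\<forall>u\<in>U. \<exists>w\<in>set (cols M). A *\<^sub>v w = u"
    using Ucols A M by (auto simp: set_cols simp del: col_mult)
  then obtain pre where pre: "\<And>u. u \<in> U \<Longrightarrow> pre u \<in> set (cols M) \<and> A *\<^sub>v pre u = u"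
    by metis
  have "(*\<^sub>v) A ` pre ` U = id ` U" unfolding image_image by (rule image_cong) (simp_all add: pre)
  then have img: "(*\<^sub>v) A ` pre ` U = U" by simp
  have inj: "inj_on ((*\<^sub>v) A) (pre ` U)" using pre by (auto intro!: inj_onI)
  have Wcols: "pre ` U \<subseteq> set (cols M)" using pre by auto
  have "finite U" using Ucols finite_subset by blast
  moreover have "pre ` U \<subseteq> carrier_vec k" using Wcols cols_dim[of M] M by auto
  ultimately have "Vk.lin_indpt (pre ` U)"
    using lin_indpt_of_inj_image[OF A _ _ inj] img Uind by simp
  then have "card (pre ` U) \<le> Vk.rank M" by (rule Vk.rank_ge_card_indpt[OF M Wcols])
  moreover have "card (pre ` U) = card U" using card_image[OF inj] img by simp
  ultimately show ?thesis using Vn.rank_card_indpt[OF AM U] by simp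
qed

lemma rank_mult_right_le:
  fixes A :: "'a::field mat"
  assumes A: "A \<in> carrier_mat n k" and B: "B \<in> carrier_mat k nc"
  shows "vec_space.rank n (A * B) \<le> vec_space.rank n A"
proof -
  interpret Vn: vec_space "TYPE('a)" n .
  define W where "W = Vn.span (set (cols A))"
  have AB: "A * B \<in> carrier_mat n nc" using A B by simp
  have colsA: "set (cols A) \<subseteq> carrier_vec n" using A cols_dim by blast
  have colsAB: "set (cols (A * B)) \<subseteq> carrier_vec n" using AB cols_dim by blast
  have "set (cols (A * B)) \<subseteq> Vn.col_space A"
  proof
    fix x assume "x \<in> set (cols (A * B))"
    then obtain j where "j < nc" "x = A *\<^sub>v col B j"
      using A B by (auto simp: set_cols simp del: col_mult)
    then show "x \<in> Vn.col_space A" unfolding Vn.col_space_eq[OF A] using A B by auto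
  qed
  then have incl: "set (cols (A * B)) \<subseteq> W" unfolding W_def Vn.col_space_def .
  have subW: "subspace class_ring W Vn.V" unfolding W_def by (rule Vn.span_is_subspace[OF colsA])
  have "Vn.span (set (cols (A * B))) \<subseteq> W"
    using Vn.span_is_subset[OF incl] subW unfolding subspace_def by blast
  then have nest: "subspace class_ring (Vn.span (set (cols (A * B)))) (Vn.vs W)"
    using Vn.nested_subspaces[OF subW Vn.span_is_subspace[OF colsAB]] by blast
  have "vectorspace.fin_dim class_ring (Vn.vs W)"
    unfolding W_def by (rule Vn.fin_dim_span_cols[OF A])
  then show ?thesis unfolding Vn.rank_def W_def[symmetric]
    using vectorspace.subspace_dim[OF Vn.subspace_is_vs[OF subW] nest] Vn.fin_dim_span_cols[OF AB]
    by auto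
qed

lemma Meval_add: "Meval m (p + q) S = Meval m p S + Meval m q S"
  by (rule eq_matI) (auto simp: Meval_def coeffM_eq_mlcoeff finite_idxset mlcoeff_add eval_add)

lemma Meval_zero: "Meval m 0 S = 0\<^sub>m (2^m) (2^m)"
  by (rule eq_matI) (auto simp: Meval_def coeffM_eq_mlcoeff finite_idxset mlcoeff_zero eval_zero)

lemma rank_Meval_mult_le:
  fixes f g h :: "'a::field mpoly"
  assumes g: "vars g \<subseteq> range Yv" and h: "vars h \<subseteq> range Zv"
  shows "vec_space.rank (2^m) (Meval m (f * (g * h)) S) \<le> vec_space.rank (2^m) (Meval m f S)"
proof -
  let ?D = "transpose_mat (mult_matrix m Yv S g)" and ?E = "mult_matrix m Zv S h"
  have D: "?D \<in> carrier_mat (2^m) (2^m)" and E: "?E \<in> carrier_mat (2^m) (2^m)"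
    by (simp_all add: mult_matrix_def)
  have "Meval m (f * (g * h)) S = Meval m (f * g * h) S" by (simp add: mult.assoc)
  also have "\<dots> = ?D * Meval m f S * ?E" unfolding Meval_mult_Z[OF h] Meval_mult_Y[OF g] ..
  also have "vec_space.rank (2^m) \<dots> \<le> vec_space.rank (2^m) (?D * Meval m f S)"
    by (rule rank_mult_right_le[OF mult_carrier_mat[OF D Meval_carrier] E])
  also have "\<dots> \<le> vec_space.rank (2^m) (Meval m f S)"
    by (rule rank_mult_left_le[OF D Meval_carrier])
  finally show ?thesis .
qed

lemma rank_Meval_mult_sum_le:
  fixes f :: "'a::field mpoly" and gs hs :: "nat \<Rightarrow> 'a mpoly"
  assumes "\<And>i. i < r \<Longrightarrow> vars (gs i) \<subseteq> range Yv" and "\<And>i. i < r \<Longrightarrow> vars (hs i) \<subseteq> range Zv"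
  shows "vec_space.rank (2^m) (Meval m (f * (\<Sum>i<r. gs i * hs i)) S)
    \<le> r * vec_space.rank (2^m) (Meval m f S)"
  using assms
proof (induction r)
  case 0
  show ?case by (simp add: Meval_zero vec_space.rank_0I)
next
  case (Suc r)
  have "Meval m (f * (\<Sum>i<Suc r. gs i * hs i)) S =
      Meval m (f * (\<Sum>i<r. gs i * hs i)) S + Meval m (f * (gs r * hs r)) S"
    by (simp add: distrib_left Meval_add)
  then have "vec_space.rank (2^m) (Meval m (f * (\<Sum>i<Suc r. gs i * hs i)) S) \<le>
      vec_space.rank (2^m) (Meval m (f * (\<Sum>i<r. gs i * hs i)) S) +
      vec_space.rank (2^m) (Meval m (f * (gs r * hs r)) S)"
    using vec_space.rank_subadditive[OF Meval_carrier Meval_carrier] by simp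
  also have "\<dots> \<le> r * vec_space.rank (2^m) (Meval m f S) + vec_space.rank (2^m) (Meval m f S)"
    using Suc by (intro add_mono Suc.IH rank_Meval_mult_le) auto
  finally show ?case by simp
qed

lemma rank_le_maxrank: "vec_space.rank (2^m) (Meval m f S) \<le> maxrank m f"
  and maxrank_attained: "\<exists>S. maxrank m f = vec_space.rank (2^m) (Meval m f S)"
proof -
  let ?R = "{vec_space.rank (2^m) (Meval m f S) | S. True}"
  have "?R \<subseteq> {..2^m}" using vec_space.rank_le_nc[OF Meval_carrier] by auto
  then have fin: "finite ?R" by (rule finite_subset) simp
  show "vec_space.rank (2^m) (Meval m f S) \<le> maxrank m f"
    unfolding maxrank_def using fin by (intro Max_ge) auto
  have "Max ?R \<in> ?R" using fin by (intro Max_in) auto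
  then show "\<exists>S. maxrank m f = vec_space.rank (2^m) (Meval m f S)" unfolding maxrank_def by auto
qed

theorem corollary2:
  fixes m r :: nat and f g :: "'a::field mpoly"
    and gs hs :: "nat \<Rightarrow> 'a mpoly"
  assumes "vars f \<subseteq> Yvars m \<union> Zvars m"
    and "vars g \<subseteq> Yvars m \<union> Zvars m"
    and "\<And>i. i < r \<Longrightarrow> vars (gs i) \<subseteq> Yvars m"
    and "\<And>i. i < r \<Longrightarrow> vars (hs i) \<subseteq> Zvars m"
    and "g = (\<Sum>i<r. gs i * hs i)"
  shows "maxrank m (f * g) \<le> r * maxrank m f"
proof -
  have "vars (gs i) \<subseteq> range Yv" "vars (hs i) \<subseteq> range Zv" if "i < r" for i
    using assms(3,4)[OF that] unfolding Yvars_def Zvars_def by blast+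
  obtain S where "maxrank m (f * g) = vec_space.rank (2^m) (Meval m (f * g) S)"
    using maxrank_attained by blast
  also have "\<dots> \<le> r * vec_space.rank (2^m) (Meval m f S)"
    unfolding assms(5) by (rule rank_Meval_mult_sum_le) fact+
  also have "\<dots> \<le> r * maxrank m f"
    by (simp add: rank_le_maxrank)
  finally show ?thesis .
qed

end
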